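(* Let $(X,\le)$ be a countable lower 1-transitive linear order, $I$ its invariant tree, and $\simeq$ the equivalence relation on $I$ defined below, with $[x]$ the $\simeq$-class of $x\in I$. If $x,y\in I$ satisfy $x\le y$ (i.e. $x\subseteq y$) and $x'\in[x]$, then there exists $y'\in[y]$ with $x'\le y'$.
   Context: A linear order $X$ is lower 1-transitive if $(-\infty,a]\cong(-\infty,b]$ for all $a,b\in X$, where $(-\infty,a]=\{x:x\le a\}$. An invariant partition of $X$ is a partition $\pi$ into convex subsets (parts) such that for all $a,b\in X$, every order isomorphism $f:(-\infty,a]\to(-\infty,b]$ and all $x,y\le a$: $x\sim_\pi y\iff f(x)\sim_\pi f(y)$. The invariant tree $I$ is the set of all parts of all invariant partitions of $X$, ordered by inclusion $\le\,=\,\subseteq$, with levels the invariant partitions (ordered by refinement); for a parent $p$ the children of $p$ (maximal proper sub-parts in $I$) are ordered by $\triangleleft$, induced from $\le$ on $X$. The right child of a parent is its $\triangleleft$-greatest child if one exists; all other children are left children. The tree of descendants of $v\in I$ is $\{u\in I:u\le v\}$ with the induced $\le$ and $\triangleleft$. The relation $\simeq$: for a level $s$ of $I$, $x\simeq_s y$ iff there are $x'\supseteq x$, $y'\supseteq y$ in $I$ and an isomorphism $\theta$ (preserving $\le$ and $\triangleleft$) from the tree of descendants of $x'$ onto that of $y'$ with $\theta(x)=y$, such that either $x'=y'$, or $x',y'$ lie on level $s$ and are both left children of a common vertex. Then $x\simeq y$ iff there is a finite sequence $x=x_0,\dots,x_n=y$ with $x_i\simeq_{s_i}x_{i+1}$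 for some levels $s_i$. *)

theory Defs
  imports Main "HOL-Library.Countable_Set"
begin

text \<open>The linear order X is the type 'a with its linorder structure.\<close>

definition down :: "'a::linorder \<Rightarrow> 'a set" where
  "down a = {x. x \<le> a}"

definition order_iso_on :: "('a::linorder \<Rightarrow> 'a) \<Rightarrow> 'a set \<Rightarrow> 'a set \<Rightarrow> bool" where
  "order_iso_on f A B \<longleftrightarrow> bij_betw f A B \<and> (\<forall>x\<in>A. \<forall>y\<in>A. x \<le> y \<longleftrightarrow> f x \<le> f y)"

definition lower_1_transitive :: "'a::linorder itself \<Rightarrow> bool" where
  "lower_1_transitive _ \<longleftrightarrow> (\<forall>a b::'a. \<exists>f. order_iso_on f (down a) (down b))"

definition convex :: "'a::linorder set \<Rightarrow> bool" where
  "convex p \<longleftrightarrow> (\<forall>x\<in>p. \<forall>z\<in>p. \<forall>y. x \<le> y \<and> y \<le> z \<longrightarrow> y \<in> p)"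

definition same_part :: "'a set set \<Rightarrow> 'a \<Rightarrow> 'a \<Rightarrow> bool" where
  "same_part \<pi> x y \<longleftrightarrow> (\<exists>p\<in>\<pi>. x \<in> p \<and> y \<in> p)"

definition convex_partition :: "'a::linorder set set \<Rightarrow> bool" where
  "convex_partition \<pi> \<longleftrightarrow>
     \<Union>\<pi> = UNIV \<and> (\<forall>p\<in>\<pi>. p \<noteq> {} \<and> convex p) \<and>
     (\<forall>p\<in>\<pi>. \<forall>q\<in>\<pi>. p \<noteq> q \<longrightarrow> p \<inter> q = {})"

definition invariant_partition :: "'a::linorder set set \<Rightarrow> bool" where
  "invariant_partition \<pi> \<longleftrightarrow> convex_partition \<pi> \<and>
     (\<forall>a b f. order_iso_on f (down a) (down b) \<longrightarrow>
        (\<forall>x\<in>down a. \<forall>y\<in>down a. same_part \<pi> x y \<longleftrightarrow> same_part \<pi> (f x) (f y)))"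

definition inv_tree :: "'a::linorder set set" where
  "inv_tree = \<Union>{\<pi>. invariant_partition \<pi>}"

definition child :: "'a::linorder set \<Rightarrow> 'a set \<Rightarrow> bool" where
  "child c p \<longleftrightarrow> c \<in> inv_tree \<and> p \<in> inv_tree \<and> c \<subset> p \<and>
     \<not> (\<exists>d\<in>inv_tree. c \<subset> d \<and> d \<subset> p)"

definition tri :: "'a::linorder set \<Rightarrow> 'a set \<Rightarrow> bool" where
  "tri u w \<longleftrightarrow> (\<exists>p. child u p \<and> child w p) \<and> (\<forall>x\<in>u. \<forall>y\<in>w. x < y)"

definition left_child :: "'a::linorder set \<Rightarrow> 'a set \<Rightarrow> bool" where
  "left_child c p \<longleftrightarrow> child c p \<and> (\<exists>d. child d p \<and> tri c d)"

definition desc :: "'a::linorder set \<Rightarrow> 'a set set" where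
  "desc v = {u \<in> inv_tree. u \<subseteq> v}"

definition tree_iso :: "('a::linorder set \<Rightarrow> 'a set) \<Rightarrow> 'a set \<Rightarrow> 'a set \<Rightarrow> bool" where
  "tree_iso \<theta> v w \<longleftrightarrow> bij_betw \<theta> (desc v) (desc w) \<and>
     (\<forall>u\<in>desc v. \<forall>u'\<in>desc v. (u \<subseteq> u' \<longleftrightarrow> \<theta> u \<subseteq> \<theta> u') \<and> (tri u u' \<longleftrightarrow> tri (\<theta> u) (\<theta> u')))"

definition sim_level :: "'a::linorder set set \<Rightarrow> 'a set \<Rightarrow> 'a set \<Rightarrow> bool" where
  "sim_level s x y \<longleftrightarrow> x \<in> inv_tree \<and> y \<in> inv_tree \<and>
     (\<exists>x' y' \<theta>. x' \<in> inv_tree \<and> y' \<in> inv_tree \<and> x \<subseteq> x' \<and> y \<subseteq> y' \<and>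
        tree_iso \<theta> x' y' \<and> \<theta> x = y \<and>
        (x' = y' \<or> (x' \<in> s \<and> y' \<in> s \<and> (\<exists>v. left_child x' v \<and> left_child y' v))))"

definition sim :: "'a::linorder set \<Rightarrow> 'a set \<Rightarrow> bool" where
  "sim = (\<lambda>x y. x \<in> inv_tree \<and> y \<in> inv_tree \<and>
     (\<lambda>u v. \<exists>s. invariant_partition s \<and> sim_level s u v)\<^sup>*\<^sup>* x y)"

end

theory Submission
  imports Defs
begin

text \<open>
  Any two parts of the invariant tree are nested or disjoint: if parts \<open>p\<close> and \<open>q\<close> crossed,
  with \<open>a \<in> p - q\<close>, \<open>c \<in> p \<inter> q\<close>, \<open>b \<in> q - p\<close> and \<open>a < c < b\<close>, an isomorphism
  \<open>(-\<infinity>,b] \<cong> (-\<infinity>,c]\<close> sends \<open>b\<close> to \<open>c\<close> and some \<open>w\<close> to \<open>a\<close>; invariance of the partition of \<open>p\<close>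
  puts \<open>w\<close> in the part of \<open>b\<close>, so \<open>c \<le> w \<le> b\<close> and \<open>w \<in> q\<close>, and invariance of the partition of
  \<open>q\<close> then puts \<open>a\<close> in \<open>q\<close>.
  Given this, one \<open>\<simeq>\<^sub>s\<close>-step from \<open>z\<close> to \<open>w\<close> via \<open>\<theta>\<close> on the descendants of \<open>x\<^sub>1\<close>, and a part
  \<open>y \<supseteq> z\<close>, either \<open>y \<subseteq> x\<^sub>1\<close>, and \<open>\<theta>\<close> carries \<open>y\<close> to a \<open>\<simeq>\<^sub>s\<close>-equivalent \<open>\<theta> y \<supseteq> w\<close>, or
  \<open>x\<^sub>1 \<subset> y\<close>, and then \<open>y\<close> also contains the common parent of \<open>x\<^sub>1\<close> and \<open>y\<^sub>1 \<supseteq> w\<close>.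
  Induction along the chain of steps gives the theorem.
\<close>

lemma inv_tree_iff: "p \<in> inv_tree \<longleftrightarrow> (\<exists>\<pi>. invariant_partition \<pi> \<and> p \<in> \<pi>)"
  by (auto simp: inv_tree_def)

lemma inv_tree_nonempty: "p \<in> inv_tree \<Longrightarrow> p \<noteq> {}"
  by (auto simp: inv_tree_def invariant_partition_def convex_partition_def)

lemma convexD: "\<lbrakk>convex p; x \<in> p; z \<in> p; x \<le> y; y \<le> z\<rbrakk> \<Longrightarrow> y \<in> p"
  unfolding convex_def by blast

lemma convex_partition_part_unique:
  "\<lbrakk>convex_partition \<pi>; p \<in> \<pi>; q \<in> \<pi>; x \<in> p; x \<in> q\<rbrakk> \<Longrightarrow> p = q"
  unfolding convex_partition_def by blast

lemma convex_partition_part_convex: "\<lbrakk>convex_partition \<pi>; p \<in> \<pi>\<rbrakk> \<Longrightarrow> convex p"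
  by (simp add: convex_partition_def)

lemma invariant_partition_same_part_iff:
  assumes "invariant_partition \<pi>" and "order_iso_on f (down a) (down b)"
    and "x \<in> down a" and "y \<in> down a"
  shows "same_part \<pi> (f x) (f y) \<longleftrightarrow> same_part \<pi> x y"
  using assms unfolding invariant_partition_def by blast

lemma order_iso_on_surj:
  "\<lbrakk>order_iso_on f A B; y \<in> B\<rbrakk> \<Longrightarrow> \<exists>x\<in>A. f x = y"
  unfolding order_iso_on_def bij_betw_def by blast

lemma order_iso_on_down_top:
  assumes "order_iso_on f (down a) (down b)"
  shows "f a = b"
proof -
  have a: "a \<in> down a" and b: "b \<in> down b" by (simp_all add: down_def)
  obtain u where u: "u \<in> down a" "f u = b"
    using order_iso_on_surj[OF assms b] by blast
  have "f a \<le> b"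
    using assms a unfolding order_iso_on_def bij_betw_def by (auto simp: down_def)
  moreover have "f u \<le> f a"
    using assms u(1) a unfolding order_iso_on_def by (auto simp: down_def)
  ultimately show ?thesis using u(2) by simp
qed

lemma invariant_parts_not_crossing:
  fixes a b c :: "'a::linorder"
  assumes L: "lower_1_transitive TYPE('a)"
    and \<pi>: "invariant_partition \<pi>" "p \<in> \<pi>" and \<sigma>: "invariant_partition \<sigma>" "q \<in> \<sigma>"
    and a: "a \<in> p" "a \<notin> q" and b: "b \<in> q" "b \<notin> p" and c: "c \<in> p" "c \<in> q"
    and "a < c" "c < b"
  shows False
proof -
  have cp\<pi>: "convex_partition \<pi>" and cp\<sigma>: "convex_partition \<sigma>"
    using \<pi> \<sigma> by (simp_all add: invariant_partition_def)
  obtain f where f: "order_iso_on f (down b) (down c)"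
    using L unfolding lower_1_transitive_def by blast
  have fb: "f b = c" using order_iso_on_down_top[OF f] .
  have b_down: "b \<in> down b" by (simp add: down_def)
  have "a \<in> down c" using \<open>a < c\<close> by (simp add: down_def)
  then obtain w where w: "w \<in> down b" "f w = a" using order_iso_on_surj[OF f] by blast
  have "same_part \<pi> a c" using \<pi>(2) a(1) c(1) by (auto simp: same_part_def)
  then obtain r where r: "r \<in> \<pi>" "w \<in> r" "b \<in> r"
    using invariant_partition_same_part_iff[OF \<pi>(1) f w(1) b_down] w fb
    by (auto simp: same_part_def)
  have "c \<le> w"
  proof (rule ccontr)
    assume "\<not> c \<le> w"
    then have "c \<in> r"
      using convexD[OF convex_partition_part_convex[OF cp\<pi> r(1)] r(2,3)] \<open>c < b\<close> by simp
    then have "r = p" using convex_partition_part_unique[OF cp\<pi> r(1) \<pi>(2) _ c(1)] by blast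
    then show False using r(3) b(2) by simp
  qed
  moreover have "w \<le> b" using w(1) by (simp add: down_def)
  ultimately have "w \<in> q"
    using convexD[OF convex_partition_part_convex[OF cp\<sigma> \<sigma>(2)] c(2) b(1)] by blast
  then have "same_part \<sigma> w b" using \<sigma>(2) b(1) by (auto simp: same_part_def)
  then obtain r' where r': "r' \<in> \<sigma>" "a \<in> r'" "c \<in> r'"
    using invariant_partition_same_part_iff[OF \<sigma>(1) f w(1) b_down] w fb
    by (auto simp: same_part_def)
  then have "r' = q" using convex_partition_part_unique[OF cp\<sigma> _ \<sigma>(2) _ c(2)] by blast
  then show False using r'(2) a(2) by simp
qed

lemma inv_tree_nested:
  fixes p q :: "'a::linorder set"
  assumes L: "lower_1_transitive TYPE('a)"
    and p: "p \<in> inv_tree" and q: "q \<in> inv_tree" and meet: "p \<inter> q \<noteq> {}"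
  shows "p \<subseteq> q \<or> q \<subseteq> p"
proof (rule ccontr)
  assume "\<not> (p \<subseteq> q \<or> q \<subseteq> p)"
  then obtain a b c where a: "a \<in> p" "a \<notin> q" and b: "b \<in> q" "b \<notin> p" and c: "c \<in> p" "c \<in> q"
    using meet by blast
  obtain \<pi> \<sigma> where \<pi>: "invariant_partition \<pi>" "p \<in> \<pi>" and \<sigma>: "invariant_partition \<sigma>" "q \<in> \<sigma>"
    using p q by (auto simp: inv_tree_iff)
  have cp: "convex p" and cq: "convex q"
    using \<pi> \<sigma> by (auto simp: invariant_partition_def convex_partition_def)
  have "a \<noteq> c" "b \<noteq> c" using a b c by auto
  then consider "a < c" "c < b" | "b < c" "c < a" | "a < c" "b < c" | "c < a" "c < b"
    by (meson linorder_neqE)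
  then show False
  proof cases
    case 1
    then show False using invariant_parts_not_crossing[OF L \<pi> \<sigma> a b c] by blast
  next
    case 2
    then show False using invariant_parts_not_crossing[OF L \<sigma> \<pi> b a c(2,1)] by blast
  next
    case 3
    then show False
      using convexD[OF cp a(1) c(1), of b] convexD[OF cq b(1) c(2), of a] a(2) b(2)
      by (cases "a \<le> b") (auto simp: less_imp_le)
  next
    case 4
    then show False
      using convexD[OF cq c(2) b(1), of a] convexD[OF cp c(1) a(1), of b] a(2) b(2)
      by (cases "a \<le> b") (auto simp: less_imp_le)
  qed
qed

definition sim_step :: "'a::linorder set \<Rightarrow> 'a set \<Rightarrow> bool" where
  "sim_step u v \<longleftrightarrow> (\<exists>s. invariant_partition s \<and> sim_level s u v)"

lemma sim_iff_sim_step: "sim x y \<longleftrightarrow> x \<in> inv_tree \<and> y \<in> inv_tree \<and> sim_step\<^sup>*\<^sup>* x y"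
proof -
  have eq: "sim_step = (\<lambda>u v. \<exists>s. invariant_partition s \<and> sim_level s u v)"
    by (simp add: fun_eq_iff sim_step_def)
  show ?thesis unfolding sim_def eq by (rule refl)
qed

lemma sim_step_inv_tree: "sim_step u v \<Longrightarrow> v \<in> inv_tree"
  unfolding sim_step_def sim_level_def by blast

lemma sim_steps_inv_tree: "\<lbrakk>sim_step\<^sup>*\<^sup>* u v; u \<in> inv_tree\<rbrakk> \<Longrightarrow> v \<in> inv_tree"
  by (induction rule: rtranclp_induct) (auto dest: sim_step_inv_tree)

lemma tree_iso_image:
  assumes "tree_iso \<theta> v w" and "u \<in> desc v"
  shows "\<theta> u \<in> desc w"
  using assms by (auto simp: tree_iso_def bij_betw_def)

lemma tree_iso_mono:
  assumes "tree_iso \<theta> v w" and "u \<in> desc v" and "u' \<in> desc v" and "u \<subseteq> u'"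
  shows "\<theta> u \<subseteq> \<theta> u'"
  using assms by (auto simp: tree_iso_def)

lemma sim_step_lift:
  fixes z w y :: "'a::linorder set"
  assumes L: "lower_1_transitive TYPE('a)"
    and step: "sim_step z w" and y: "y \<in> inv_tree" "z \<subseteq> y"
  shows "\<exists>y'. sim_step\<^sup>=\<^sup>= y y' \<and> w \<subseteq> y'"
proof -
  obtain s x\<^sub>1 y\<^sub>1 \<theta> where s: "invariant_partition s" and z: "z \<in> inv_tree"
    and x\<^sub>1: "x\<^sub>1 \<in> inv_tree" and y\<^sub>1: "y\<^sub>1 \<in> inv_tree" and "z \<subseteq> x\<^sub>1" and "w \<subseteq> y\<^sub>1"
    and \<theta>: "tree_iso \<theta> x\<^sub>1 y\<^sub>1" "\<theta> z = w"
    and top: "x\<^sub>1 = y\<^sub>1 \<or> (x\<^sub>1 \<in> s \<and> y\<^sub>1 \<in> s \<and> (\<exists>v. left_child x\<^sub>1 v \<and> left_child y\<^sub>1 v))"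
    using step unfolding sim_step_def sim_level_def by blast
  have "x\<^sub>1 \<inter> y \<noteq> {}" using inv_tree_nonempty[OF z] \<open>z \<subseteq> x\<^sub>1\<close> y(2) by blast
  then consider "y \<subseteq> x\<^sub>1" | "x\<^sub>1 \<subset> y" using inv_tree_nested[OF L x\<^sub>1 y(1)] by blast
  then show ?thesis
  proof cases
    case 1
    have yd: "y \<in> desc x\<^sub>1" and zd: "z \<in> desc x\<^sub>1"
      using 1 y z \<open>z \<subseteq> x\<^sub>1\<close> by (simp_all add: desc_def)
    have "\<theta> y \<in> desc y\<^sub>1" using tree_iso_image[OF \<theta>(1) yd] .
    then have "\<theta> y \<in> inv_tree" "\<theta> y \<subseteq> y\<^sub>1" by (simp_all add: desc_def)
    then have "sim_level s y (\<theta> y)"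
      unfolding sim_level_def using y(1) x\<^sub>1 y\<^sub>1 1 \<theta>(1) top by blast
    moreover have "w \<subseteq> \<theta> y" using tree_iso_mono[OF \<theta>(1) zd yd y(2)] \<theta>(2) by simp
    ultimately show ?thesis using s unfolding sim_step_def by blast
  next
    case 2
    have "w \<subseteq> y"
    proof (cases "x\<^sub>1 = y\<^sub>1")
      case True
      then show ?thesis using \<open>w \<subseteq> y\<^sub>1\<close> 2 by blast
    next
      case False
      then obtain v where v: "child x\<^sub>1 v" "child y\<^sub>1 v"
        using top unfolding left_child_def by blast
      then have "v \<in> inv_tree" "x\<^sub>1 \<subset> v" "y\<^sub>1 \<subset> v" by (auto simp: child_def)
      moreover have "v \<inter> y \<noteq> {}"
        using inv_tree_nonempty[OF x\<^sub>1] \<open>x\<^sub>1 \<subset> v\<close> 2 by blast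
      moreover have "\<not> y \<subset> v" using v(1) 2 y(1) unfolding child_def by blast
      ultimately have "v \<subseteq> y" using inv_tree_nested[OF L _ y(1)] by blast
      then show ?thesis using \<open>w \<subseteq> y\<^sub>1\<close> \<open>y\<^sub>1 \<subset> v\<close> by blast
    qed
    then show ?thesis by blast
  qed
qed

lemma sim_steps_lift:
  fixes x x' y :: "'a::linorder set"
  assumes L: "lower_1_transitive TYPE('a)"
    and "sim_step\<^sup>*\<^sup>* x x'" and "y \<in> inv_tree" and "x \<subseteq> y"
  shows "\<exists>y'. sim_step\<^sup>*\<^sup>* y y' \<and> x' \<subseteq> y'"
  using assms(2)
proof (induction rule: rtranclp_induct)
  case base
  then show ?case using assms(4) by blast
next
  case (step z w)
  then obtain y'' where y'': "sim_step\<^sup>*\<^sup>* y y''" "z \<subseteq> y''" by blast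
  obtain y''' where y''': "sim_step\<^sup>=\<^sup>= y'' y'''" "w \<subseteq> y'''"
    using sim_step_lift[OF L step(2) sim_steps_inv_tree[OF y''(1) assms(3)] y''(2)] by blast
  from y'''(1) have "sim_step\<^sup>*\<^sup>* y'' y'''" by auto
  then show ?case using y''(1) y'''(2) rtranclp_trans by metis
qed

theorem lemma4p8:
  fixes x y x' :: "'a::linorder set"
  assumes "countable (UNIV :: 'a set)"
    and "lower_1_transitive TYPE('a)"
    and "x \<in> inv_tree" and "y \<in> inv_tree" and "x \<subseteq> y"
    and "sim x x'"
  shows "\<exists>y'. sim y y' \<and> x' \<subseteq> y'"
proof -
  obtain y' where y': "sim_step\<^sup>*\<^sup>* y y'" "x' \<subseteq> y'"
    using sim_steps_lift[OF assms(2) _ assms(4,5)] assms(6) by (auto simp: sim_iff_sim_step)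
  then show ?thesis using sim_steps_inv_tree[OF y'(1) assms(4)] assms(4) by (auto simp: sim_iff_sim_step)
qed

end
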